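(* Let $\mathbf L=(L,\vee,\wedge,0,1)$ be a complemented modular lattice with $0\ne1$ and let $\Phi$ be a congruence of the semilattice $(L,\wedge)$. Then: (i) $[1]\Phi$ is a deductive system of $\mathbf L$; (ii) $\Theta([1]\Phi)\subseteq\Phi$.
   Context: For $a\in L$, $a^+:=\{x\in L\mid a\vee x=1,\ a\wedge x=0\}$ (the set of all complements of $a$), and $a\to b:=\{x\vee(a\wedge b)\mid x\in a^+\}$. A deductive system of $\mathbf L$ is a subset $D\subseteq L$ such that $1\in D$, and whenever $a\in D$, $b\in L$ and $a\to b\subseteq D$, then $b\in D$. For a deductive system $D$, $\Theta(D):=\{(x,y)\in L^2\mid x\to y\subseteq D\text{ and }y\to x\subseteq D\}$. $[1]\Phi$ denotes the $\Phi$-class of $1$. *)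

theory Defs
  imports Main
begin

definition modular_lat :: "'a::bounded_lattice itself \<Rightarrow> bool" where
  "modular_lat _ \<longleftrightarrow> (\<forall>x y z :: 'a. x \<le> z \<longrightarrow> sup x (inf y z) = inf (sup x y) z)"

definition complements :: "'a::bounded_lattice \<Rightarrow> 'a set" where
  "complements a = {x. sup a x = top \<and> inf a x = bot}"

definition complemented_lat :: "'a::bounded_lattice itself \<Rightarrow> bool" where
  "complemented_lat _ \<longleftrightarrow> (\<forall>a :: 'a. complements a \<noteq> {})"

definition limp :: "'a::bounded_lattice \<Rightarrow> 'a \<Rightarrow> 'a set" where
  "limp a b = {sup x (inf a b) | x. x \<in> complements a}"

definition deductive_system :: "'a::bounded_lattice set \<Rightarrow> bool" where
  "deductive_system D \<longleftrightarrow> top \<in> D \<and> (\<forall>a b. a \<in> D \<and> limp a b \<subseteq> D \<longrightarrow> b \<in> D)"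

definition Theta :: "'a::bounded_lattice set \<Rightarrow> ('a \<times> 'a) set" where
  "Theta D = {(x, y). limp x y \<subseteq> D \<and> limp y x \<subseteq> D}"

definition meet_congruence :: "('a::bounded_lattice \<times> 'a) set \<Rightarrow> bool" where
  "meet_congruence \<Phi> \<longleftrightarrow> equiv UNIV \<Phi> \<and>
     (\<forall>a b c d. (a, b) \<in> \<Phi> \<and> (c, d) \<in> \<Phi> \<longrightarrow> (inf a c, inf b d) \<in> \<Phi>)"

end

theory Submission
  imports Defs
begin

text \<open>
  If \<open>c\<close> is a complement of \<open>a\<close>, modularity gives \<open>a \<and> (c \<or> (a \<and> b)) = a \<and> b\<close>.
  So when all of \<open>a \<rightarrow> b\<close> lies in the class \<open>[1]\<Phi>\<close>, meeting \<open>1 \<Phi> c \<or> (a \<and> b)\<close>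
  with \<open>a\<close> yields \<open>a \<Phi> a \<and> b\<close>. For \<open>a \<in> [1]\<Phi>\<close> this gives \<open>a \<and> b \<in> [1]\<Phi>\<close>, and then
  \<open>b = b \<and> 1 \<Phi> b \<and> a \<and> b = a \<and> b\<close>, so \<open>b \<in> [1]\<Phi>\<close>; applied to both \<open>x \<rightarrow> y\<close> and
  \<open>y \<rightarrow> x\<close> it gives \<open>x \<Phi> x \<and> y \<Phi> y\<close>.
\<close>

lemma modular_inf_sup_complement:
  fixes a b c :: "'a::bounded_lattice"
  assumes "modular_lat TYPE('a)" and "c \<in> complements a"
  shows "inf a (sup c (inf a b)) = inf a b"
proof -
  have "sup (inf a b) (inf c a) = inf (sup (inf a b) c) a"
    using assms(1) unfolding modular_lat_def by (metis inf_le1)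
  moreover have "inf c a = bot"
    using assms(2) unfolding complements_def by (simp add: inf_commute)
  ultimately show ?thesis
    by (simp add: inf_commute sup_commute)
qed

lemma meet_congruence_equiv: "meet_congruence \<Phi> \<Longrightarrow> equiv UNIV \<Phi>"
  unfolding meet_congruence_def by blast

lemma meet_congruence_inf_left:
  assumes "meet_congruence \<Phi>" and "(x, y) \<in> \<Phi>"
  shows "(inf z x, inf z y) \<in> \<Phi>"
proof -
  have "(z, z) \<in> \<Phi>"
    using meet_congruence_equiv[OF assms(1)] by (simp add: equiv_def refl_on_def)
  then show ?thesis
    using assms unfolding meet_congruence_def by blast
qed

lemma limp_in_top_class_imp_cong_inf:
  fixes a b :: "'a::bounded_lattice"
  assumes "modular_lat TYPE('a)" and "complements a \<noteq> {}" and "meet_congruence \<Phi>"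
    and "limp a b \<subseteq> \<Phi> `` {top}"
  shows "(a, inf a b) \<in> \<Phi>"
proof -
  obtain c where c: "c \<in> complements a"
    using assms(2) by blast
  then have "sup c (inf a b) \<in> limp a b"
    unfolding limp_def by blast
  then have "(top, sup c (inf a b)) \<in> \<Phi>"
    using assms(4) by blast
  then have "(inf a top, inf a (sup c (inf a b))) \<in> \<Phi>"
    by (rule meet_congruence_inf_left[OF assms(3)])
  then show ?thesis
    by (simp add: modular_inf_sup_complement[OF assms(1) c])
qed

lemma top_class_deductive_system:
  fixes \<Phi> :: "('a::bounded_lattice \<times> 'a) set"
  assumes "modular_lat TYPE('a)" and "complemented_lat TYPE('a)" and "meet_congruence \<Phi>"
  shows "deductive_system (\<Phi> `` {top})"
  unfolding deductive_system_def
proof (intro conjI allI impI)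
  have equiv: "equiv UNIV \<Phi>"
    using assms(3) by (rule meet_congruence_equiv)
  then show "top \<in> \<Phi> `` {top}"
    by (rule equiv_class_self) simp
  fix a b :: 'a
  assume "a \<in> \<Phi> `` {top} \<and> limp a b \<subseteq> \<Phi> `` {top}"
  then have top_a: "(top, a) \<in> \<Phi>" and limp_ab: "limp a b \<subseteq> \<Phi> `` {top}"
    by auto
  have "(a, inf a b) \<in> \<Phi>"
    using assms(2) limp_ab unfolding complemented_lat_def
    by (blast intro: limp_in_top_class_imp_cong_inf[OF assms(1) _ assms(3)])
  with top_a have top_ab: "(top, inf a b) \<in> \<Phi>"
    using equiv by (meson equivE transD)
  then have "(inf b top, inf b (inf a b)) \<in> \<Phi>"
    by (rule meet_congruence_inf_left[OF assms(3)])
  then have "(b, inf a b) \<in> \<Phi>"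
    by (simp add: inf_left_commute)
  with top_ab show "b \<in> \<Phi> `` {top}"
    using equiv by (meson Image_singleton_iff equivE symD transD)
qed

lemma Theta_top_class_subset:
  fixes \<Phi> :: "('a::bounded_lattice \<times> 'a) set"
  assumes "modular_lat TYPE('a)" and "complemented_lat TYPE('a)" and "meet_congruence \<Phi>"
  shows "Theta (\<Phi> `` {top}) \<subseteq> \<Phi>"
proof clarify
  fix x y :: 'a
  assume "(x, y) \<in> Theta (\<Phi> `` {top})"
  then have "limp x y \<subseteq> \<Phi> `` {top}" and "limp y x \<subseteq> \<Phi> `` {top}"
    unfolding Theta_def by auto
  then have "(x, inf x y) \<in> \<Phi>" and "(y, inf y x) \<in> \<Phi>"
    using assms unfolding complemented_lat_def by (blast intro: limp_in_top_class_imp_cong_inf)+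
  then show "(x, y) \<in> \<Phi>"
    using meet_congruence_equiv[OF assms(3)] by (metis inf_commute equivE symD transD)
qed

theorem proposition8:
  fixes \<Phi> :: "('a::bounded_lattice \<times> 'a) set"
  assumes "modular_lat TYPE('a)"
    and "complemented_lat TYPE('a)"
    and "(bot::'a) \<noteq> top"
    and "meet_congruence \<Phi>"
  shows "deductive_system (\<Phi> `` {top}) \<and> Theta (\<Phi> `` {top}) \<subseteq> \<Phi>"
  using top_class_deductive_system[OF assms(1,2,4)] Theta_top_class_subset[OF assms(1,2,4)]
  by blast

end
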